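(* Let $g \in L^2(\mathbb{R})$ with $\|g\|_2 = 1$ and $\Lambda = \{(a_k,b_k)\}_{k=1}^N \subset \mathbb{R}^2$, and assume that $\mathcal{G}(g,\Lambda) = \{M_{b_k}T_{a_k} g\}_{k=1}^N$ is linearly independent. Let $G_N = (\langle M_{b_k}T_{a_k} g, M_{b_\ell}T_{a_\ell} g\rangle)_{k,\ell=1}^N$ (positive definite), for $(a,b)\in\mathbb{R}^2$ let $u(a,b)\in\mathbb{C}^N$ have entries $u(a,b)_k = e^{-2\pi i a_k(b-b_k)}V_g g(a-a_k,b-b_k)$, and let $F(a,b) = \langle G_N^{-1}u(a,b),u(a,b)\rangle$. For $(a,b)\in\mathbb{R}^2$ let $\Lambda' = \Lambda\cup\{(a,b)\}$. Then $\mathcal{G}(g,\Lambda')$ is linearly independent if and only if $F(a,b) < 1$. Furthermore, there exists $R = R(\Lambda,g) > 0$ such that for all $(a,b)\in\mathbb{R}^2$ with $|(a,b)| > R$, $\mathcal{G}(g,\Lambda\cup\{(a,b)\})$ is linearly independent.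
   Context: $M_b f(x) = e^{2\pi i b x} f(x)$, $T_a f(x) = f(x-a)$, and for a finite set $\Lambda=\{(a_k,b_k)\}\subset\mathbb{R}^2$, $\mathcal{G}(g,\Lambda) = \{M_{b_k}T_{a_k}g\}$. The short-time Fourier transform is $V_g f(x,y) = \int_{\mathbb{R}} f(t)\overline{g(t-x)} e^{-2\pi i y t}\,dt$. Inner products are linear in the first argument. *)

theory Defs
  imports "HOL-Analysis.Analysis"
begin

definition modulation :: "real \<Rightarrow> (real \<Rightarrow> complex) \<Rightarrow> real \<Rightarrow> complex" where
  "modulation b f x = exp (2 * complex_of_real pi * \<i> * complex_of_real (b * x)) * f x"

definition translation :: "real \<Rightarrow> (real \<Rightarrow> complex) \<Rightarrow> real \<Rightarrow> complex" where
  "translation a f x = f (x - a)"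

definition gabor :: "(real \<Rightarrow> complex) \<Rightarrow> ('i \<Rightarrow> real \<times> real) \<Rightarrow> 'i \<Rightarrow> real \<Rightarrow> complex" where
  "gabor g \<Lambda> k = modulation (snd (\<Lambda> k)) (translation (fst (\<Lambda> k)) g)"

definition inner_L2 :: "(real \<Rightarrow> complex) \<Rightarrow> (real \<Rightarrow> complex) \<Rightarrow> complex" where
  "inner_L2 f h = (LINT t|lborel. f t * cnj (h t))"

definition stft :: "(real \<Rightarrow> complex) \<Rightarrow> (real \<Rightarrow> complex) \<Rightarrow> real \<Rightarrow> real \<Rightarrow> complex" where
  "stft g f x y = (LINT t|lborel. f t * cnj (g (t - x)) * exp (- 2 * complex_of_real pi * \<i> * complex_of_real (y * t)))"

definition lin_indep_L2 :: "('i::finite \<Rightarrow> real \<Rightarrow> complex) \<Rightarrow> bool" where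
  "lin_indep_L2 \<phi> \<longleftrightarrow>
     (\<forall>c :: 'i \<Rightarrow> complex. (AE t in lborel. (\<Sum>i\<in>UNIV. c i * \<phi> i t) = 0) \<longrightarrow> (\<forall>i. c i = 0))"

definition gram :: "(real \<Rightarrow> complex) \<Rightarrow> ('n::finite \<Rightarrow> real \<times> real) \<Rightarrow> complex ^'n^'n" where
  "gram g \<Lambda> = (\<chi> k l. inner_L2 (gabor g \<Lambda> k) (gabor g \<Lambda> l))"

definition uvec :: "(real \<Rightarrow> complex) \<Rightarrow> ('n::finite \<Rightarrow> real \<times> real) \<Rightarrow> real \<Rightarrow> real \<Rightarrow> complex ^'n" where
  "uvec g \<Lambda> a b = (\<chi> k. exp (- 2 * complex_of_real pi * \<i> * complex_of_real (fst (\<Lambda> k) * (b - snd (\<Lambda> k))))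
                          * stft g g (a - fst (\<Lambda> k)) (b - snd (\<Lambda> k)))"

definition Ffun :: "(real \<Rightarrow> complex) \<Rightarrow> ('n::finite \<Rightarrow> real \<times> real) \<Rightarrow> real \<Rightarrow> real \<Rightarrow> complex" where
  "Ffun g \<Lambda> a b = (let u = uvec g \<Lambda> a b; v = matrix_inv (gram g \<Lambda>) *v u
                    in (\<Sum>k\<in>UNIV. v $ k * cnj (u $ k)))"

definition extend_pts :: "('n \<Rightarrow> real \<times> real) \<Rightarrow> real \<times> real \<Rightarrow> 'n option \<Rightarrow> real \<times> real" where
  "extend_pts \<Lambda> p = case_option p \<Lambda>"

end

theory Submission
  imports Defs
begin

text \<open>
  The new atom \<open>f = M\<^sub>b T\<^sub>a g\<close> can be added to an independent Gabor system without losing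
  independence iff \<open>f\<close> is not in its span, i.e. iff the residual \<open>f - P f\<close> of the orthogonal
  projection \<open>P\<close> onto the span is nonzero.  Computing \<open>P\<close> through the Gram matrix \<open>G\<^sub>N\<close>
  gives \<open>\<parallel>f - P f\<parallel>\<^sup>2 = \<parallel>f\<parallel>\<^sup>2 - F(a,b) = 1 - F(a,b)\<close>, which is the criterion.

  For the second claim, \<open>\<bar>u(a,b)\<^sub>k\<bar> = \<bar>V\<^sub>g g(a - a\<^sub>k, b - b\<^sub>k)\<bar>\<close>, and \<open>V\<^sub>g g\<close> vanishes at
  infinity: for large \<open>\<bar>x\<bar>\<close> because little of the mass of \<open>g\<close> lies outside a large interval, and
  for large \<open>\<bar>y\<bar>\<close> because shifting the integration variable by \<open>1/(2y)\<close> changes the sign of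
  the character, so that \<open>2 \<bar>V\<^sub>g g(x,y)\<bar>\<close> is controlled by \<open>\<parallel>g(\<cdot> + 1/(2y)) - g\<parallel>\<close>, which is
  small by the continuity of translation in \<open>L\<^sup>2\<close>.  Hence \<open>\<bar>F(a,b)\<bar> \<le> C \<bar>u(a,b)\<bar>\<^sup>2 < 1\<close> far
  away.
\<close>

section \<open>Square-integrable functions\<close>

lemma borel_measurable_cnj [measurable (raw)]:
  "f \<in> borel_measurable M \<Longrightarrow> (\<lambda>x. cnj (f x)) \<in> borel_measurable M"
  by (rule borel_measurable_continuous_on) (auto intro: continuous_intros)

definition square_integrable :: "(real \<Rightarrow> complex) \<Rightarrow> bool" where
  "square_integrable f \<longleftrightarrow> f \<in> borel_measurable lborel \<and> integrable lborel (\<lambda>t. (cmod (f t))\<^sup>2)"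

lemma mult_le_weighted_squares:
  fixes x y a :: real
  assumes "a > 0"
  shows "x * y \<le> (a * x\<^sup>2 + y\<^sup>2 / a) / 2"
proof -
  have "0 \<le> (a * x - y)\<^sup>2 / a" using assms by simp
  also have "(a * x - y)\<^sup>2 / a = a * x\<^sup>2 + y\<^sup>2 / a - 2 * x * y"
    using assms by (simp add: power2_eq_square field_simps)
  finally show ?thesis by simp
qed

lemma norm_add_squared_le:
  fixes a b :: "'a::real_normed_vector"
  shows "(norm (a + b))\<^sup>2 \<le> 2 * (norm a)\<^sup>2 + 2 * (norm b)\<^sup>2"
proof -
  have "(norm (a + b))\<^sup>2 \<le> (norm a + norm b)\<^sup>2"
    by (simp add: power_mono norm_triangle_ineq)
  also have "\<dots> \<le> 2 * (norm a)\<^sup>2 + 2 * (norm b)\<^sup>2"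
    using mult_le_weighted_squares[of 1 "norm a" "norm b"] by (simp add: power2_sum)
  finally show ?thesis .
qed

lemma integrable_norm_mult:
  assumes "square_integrable f" "square_integrable h"
  shows "integrable lborel (\<lambda>t. cmod (f t) * cmod (h t))"
proof (rule Bochner_Integration.integrable_bound)
  show "integrable lborel (\<lambda>t. ((cmod (f t))\<^sup>2 + (cmod (h t))\<^sup>2) / 2)"
    using assms by (auto simp: square_integrable_def)
  show "(\<lambda>t. cmod (f t) * cmod (h t)) \<in> borel_measurable lborel"
    using assms by (auto simp: square_integrable_def)
  show "AE t in lborel. norm (cmod (f t) * cmod (h t)) \<le> norm (((cmod (f t))\<^sup>2 + (cmod (h t))\<^sup>2) / 2)"
    using mult_le_weighted_squares[of 1] by (auto simp: abs_mult)
qed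

lemma integrable_mult_cnj:
  assumes "square_integrable f" "square_integrable h"
  shows "integrable lborel (\<lambda>t. f t * cnj (h t))"
  by (rule Bochner_Integration.integrable_bound[OF integrable_norm_mult[OF assms]])
    (use assms in \<open>auto simp: square_integrable_def norm_mult\<close>)

lemma integral_norm_mult_le_weighted:
  assumes "square_integrable f" "square_integrable h" "a > 0"
  shows "(LINT t|lborel. cmod (f t) * cmod (h t)) \<le>
     (a * (LINT t|lborel. (cmod (f t))\<^sup>2) + (LINT t|lborel. (cmod (h t))\<^sup>2) / a) / 2"
proof -
  have "(LINT t|lborel. cmod (f t) * cmod (h t))
      \<le> (LINT t|lborel. (a * (cmod (f t))\<^sup>2 + (cmod (h t))\<^sup>2 / a) / 2)"
    by (rule integral_mono)
      (use assms integrable_norm_mult[OF assms(1,2)] mult_le_weighted_squares[OF assms(3)]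
        in \<open>auto simp: square_integrable_def\<close>)
  also have "\<dots> = (a * (LINT t|lborel. (cmod (f t))\<^sup>2) + (LINT t|lborel. (cmod (h t))\<^sup>2) / a) / 2"
    using assms by (simp add: square_integrable_def)
  finally show ?thesis .
qed

lemma square_integrable_add:
  assumes "square_integrable f" "square_integrable h"
  shows "square_integrable (\<lambda>t. f t + h t)"
  unfolding square_integrable_def
proof
  show "(\<lambda>t. f t + h t) \<in> borel_measurable lborel"
    using assms by (auto simp: square_integrable_def)
  show "integrable lborel (\<lambda>t. (cmod (f t + h t))\<^sup>2)"
    by (rule Bochner_Integration.integrable_bound
        [where f = "\<lambda>t. 2 * (cmod (f t))\<^sup>2 + 2 * (cmod (h t))\<^sup>2"])
      (use assms norm_add_squared_le in \<open>auto simp: square_integrable_def\<close>)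
qed

lemma square_integrable_cmult: "square_integrable f \<Longrightarrow> square_integrable (\<lambda>t. c * f t)"
  by (auto simp: square_integrable_def norm_mult power_mult_distrib)

lemma square_integrable_diff:
  assumes "square_integrable f" "square_integrable h"
  shows "square_integrable (\<lambda>t. f t - h t)"
  using square_integrable_add[OF assms(1) square_integrable_cmult[OF assms(2), of "-1"]] by simp

lemma L2_norm_add_le:
  assumes "square_integrable f" "square_integrable h"
  shows "(LINT t|lborel. (cmod (f t + h t))\<^sup>2)
    \<le> 2 * (LINT t|lborel. (cmod (f t))\<^sup>2) + 2 * (LINT t|lborel. (cmod (h t))\<^sup>2)"
proof -
  have "(LINT t|lborel. (cmod (f t + h t))\<^sup>2)
      \<le> (LINT t|lborel. 2 * (cmod (f t))\<^sup>2 + 2 * (cmod (h t))\<^sup>2)"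
    by (rule integral_mono)
      (use assms square_integrable_add[OF assms] norm_add_squared_le
        in \<open>auto simp: square_integrable_def\<close>)
  thus ?thesis using assms by (simp add: square_integrable_def)
qed

lemma square_integrable_sum:
  "finite I \<Longrightarrow> (\<And>i. i \<in> I \<Longrightarrow> square_integrable (f i)) \<Longrightarrow> square_integrable (\<lambda>t. \<Sum>i\<in>I. f i t)"
proof (induction I rule: finite_induct)
  case empty
  then show ?case by (simp add: square_integrable_def)
next
  case (insert x F)
  then show ?case by (auto intro!: square_integrable_add)
qed

lemma square_integrable_unimodular_mult:
  assumes "square_integrable f" "e \<in> borel_measurable lborel" "\<And>t. cmod (e t) = 1"
  shows "square_integrable (\<lambda>t. e t * f t)"
  using assms by (auto simp: square_integrable_def norm_mult)

lemma square_integrable_indicator_mult: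
  assumes "square_integrable f" "S \<in> sets borel"
  shows "square_integrable (\<lambda>t. indicator S t * f t)"
  unfolding square_integrable_def
proof
  show m: "(\<lambda>t. indicator S t * f t) \<in> borel_measurable lborel"
    using assms by (auto simp: square_integrable_def)
  show "integrable lborel (\<lambda>t. (cmod (indicator S t * f t))\<^sup>2)"
    by (rule Bochner_Integration.integrable_bound[where f = "\<lambda>t. (cmod (f t))\<^sup>2"])
      (use assms m in \<open>auto intro!: AE_I2 simp: indicator_def square_integrable_def\<close>)
qed

lemma lborel_integral_shift:
  fixes f :: "real \<Rightarrow> 'a::{banach, second_countable_topology}"
  shows "(LINT t|lborel. f (t + c)) = (LINT t|lborel. f t)"
  using lborel_integral_real_affine[of 1 f c] by (simp add: add.commute)

lemma lborel_integrable_shift_iff: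
  fixes f :: "real \<Rightarrow> 'a::{banach, second_countable_topology}"
  shows "integrable lborel (\<lambda>t. f (t + c)) \<longleftrightarrow> integrable lborel f"
  using lborel_integrable_real_affine_iff[of 1 f c] by (simp add: add.commute)

lemma L2_norm_shift:
  fixes g :: "real \<Rightarrow> complex"
  shows "(LINT t|lborel. (cmod (g (t + c)))\<^sup>2) = (LINT t|lborel. (cmod (g t))\<^sup>2)"
  by (rule lborel_integral_shift[of "\<lambda>t. (cmod (g t))\<^sup>2"])

lemma square_integrable_shift: "square_integrable f \<Longrightarrow> square_integrable (\<lambda>t. f (t + c))"
  by (auto simp: square_integrable_def lborel_integrable_shift_iff[of "\<lambda>t. (cmod (f t))\<^sup>2"])

lemma L2_norm_eq_0_iff_AE:
  assumes "square_integrable f"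
  shows "(LINT t|lborel. (cmod (f t))\<^sup>2) = 0 \<longleftrightarrow> (AE t in lborel. f t = 0)"
proof -
  have "(LINT t|lborel. (cmod (f t))\<^sup>2) = 0 \<longleftrightarrow> (AE t in lborel. (cmod (f t))\<^sup>2 = 0)"
    using assms by (intro integral_nonneg_eq_0_iff_AE) (auto simp: square_integrable_def)
  thus ?thesis by simp
qed

section \<open>The inner product of \<open>L\<^sup>2(\<real>)\<close>\<close>

lemma cnj_inner_L2: "cnj (inner_L2 f h) = inner_L2 h f"
  unfolding inner_L2_def by (simp flip: Bochner_Integration.integral_cnj add: mult.commute)

lemma inner_L2_self: "inner_L2 f f = complex_of_real (LINT t|lborel. (cmod (f t))\<^sup>2)"
proof -
  have "(\<lambda>t. f t * cnj (f t)) = (\<lambda>t. complex_of_real ((cmod (f t))\<^sup>2))"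
    by (simp only: complex_norm_square)
  thus ?thesis unfolding inner_L2_def by (simp only: integral_complex_of_real)
qed

lemma inner_L2_sum_left:
  assumes "finite I" "\<And>i. i \<in> I \<Longrightarrow> square_integrable (f i)" "square_integrable h"
  shows "inner_L2 (\<lambda>t. \<Sum>i\<in>I. c i * f i t) h = (\<Sum>i\<in>I. c i * inner_L2 (f i) h)"
proof -
  have "inner_L2 (\<lambda>t. \<Sum>i\<in>I. c i * f i t) h = (LINT t|lborel. (\<Sum>i\<in>I. c i * (f i t * cnj (h t))))"
    unfolding inner_L2_def by (simp add: sum_distrib_right mult.assoc)
  also have "\<dots> = (\<Sum>i\<in>I. c i * inner_L2 (f i) h)"
    unfolding inner_L2_def
    by (subst Bochner_Integration.integral_sum[of I lborel "\<lambda>i t. c i * (f i t * cnj (h t))"])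
      (use assms integrable_mult_cnj in auto)
  finally show ?thesis .
qed

lemma inner_L2_sum_right:
  assumes "finite I" "\<And>i. i \<in> I \<Longrightarrow> square_integrable (f i)" "square_integrable h"
  shows "inner_L2 h (\<lambda>t. \<Sum>i\<in>I. c i * f i t) = (\<Sum>i\<in>I. cnj (c i) * inner_L2 h (f i))"
proof -
  have "inner_L2 h (\<lambda>t. \<Sum>i\<in>I. c i * f i t) = cnj (\<Sum>i\<in>I. c i * inner_L2 (f i) h)"
    using inner_L2_sum_left[OF assms, where c = c] cnj_inner_L2[of "\<lambda>t. \<Sum>i\<in>I. c i * f i t" h] by simp
  thus ?thesis by (simp add: cnj_inner_L2)
qed

lemma inner_L2_diff_left:
  assumes "square_integrable f" "square_integrable f'" "square_integrable h"
  shows "inner_L2 (\<lambda>t. f t - f' t) h = inner_L2 f h - inner_L2 f' h"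
  unfolding inner_L2_def using assms integrable_mult_cnj by (simp add: left_diff_distrib)

lemma inner_L2_diff_right:
  assumes "square_integrable f" "square_integrable h" "square_integrable h'"
  shows "inner_L2 f (\<lambda>t. h t - h' t) = inner_L2 f h - inner_L2 f h'"
  unfolding inner_L2_def using assms integrable_mult_cnj by (simp add: right_diff_distrib)

lemma inner_L2_cong_AE_right:
  assumes "square_integrable f" "square_integrable h" "square_integrable h'"
    and "AE t in lborel. h t = h' t"
  shows "inner_L2 f h = inner_L2 f h'"
  unfolding inner_L2_def
  by (rule integral_cong_AE) (use assms in \<open>auto simp: square_integrable_def\<close>)

lemma lin_indep_L2D:
  "lin_indep_L2 \<phi> \<Longrightarrow> (AE t in lborel. (\<Sum>i\<in>UNIV. c i * \<phi> i t) = 0) \<Longrightarrow> c i = 0"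
  unfolding lin_indep_L2_def by blast

lemma sum_UNIV_option:
  "(\<Sum>x\<in>(UNIV :: 'n::finite option set). F x) = F None + (\<Sum>k\<in>UNIV. F (Some k))"
  by (simp add: UNIV_option_conv sum.reindex)

section \<open>Orthogonal projection onto the span of a finite family\<close>

definition gram_matrix :: "('n::finite \<Rightarrow> real \<Rightarrow> complex) \<Rightarrow> complex^'n^'n" where
  "gram_matrix \<phi> = (\<chi> k l. inner_L2 (\<phi> k) (\<phi> l))"

lemma gram_matrix_mult_vector:
  assumes "\<And>k. square_integrable (\<phi> k)"
  shows "(gram_matrix \<phi> *v z) $ k = inner_L2 (\<phi> k) (\<lambda>t. \<Sum>l\<in>UNIV. cnj (z $ l) * \<phi> l t)"
  by (subst inner_L2_sum_right) (auto simp: assms matrix_vector_mult_def gram_matrix_def mult.commute)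

lemma gram_matrix_mult_eq_0:
  assumes sq: "\<And>k. square_integrable (\<phi> k)" and indep: "lin_indep_L2 \<phi>"
    and z: "gram_matrix \<phi> *v z = 0"
  shows "z = 0"
proof -
  define \<psi> where "\<psi> = (\<lambda>t. \<Sum>l\<in>UNIV. cnj (z $ l) * \<phi> l t)"
  have sq\<psi>: "square_integrable \<psi>"
    unfolding \<psi>_def by (intro square_integrable_sum square_integrable_cmult sq) simp
  have "inner_L2 \<psi> \<psi> = (\<Sum>l\<in>UNIV. cnj (z $ l) * inner_L2 (\<phi> l) \<psi>)"
    by (subst (1) \<psi>_def, rule inner_L2_sum_left) (use sq sq\<psi> in auto)
  also have "\<dots> = 0"
    using gram_matrix_mult_vector[where \<phi> = \<phi> and z = z, OF sq] z by (simp add: \<psi>_def)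
  finally have "AE t in lborel. \<psi> t = 0"
    by (simp add: inner_L2_self L2_norm_eq_0_iff_AE[OF sq\<psi>])
  hence "cnj (z $ l) = 0" for l
    using lin_indep_L2D[OF indep, of "\<lambda>l. cnj (z $ l)"] by (simp add: \<psi>_def)
  thus "z = 0" by (simp add: vec_eq_iff)
qed

lemma invertible_gram_matrix:
  "(\<And>k. square_integrable (\<phi> k)) \<Longrightarrow> lin_indep_L2 \<phi> \<Longrightarrow> invertible (gram_matrix \<phi>)"
  by (auto simp: invertible_left_inverse matrix_left_invertible_ker intro: gram_matrix_mult_eq_0)

lemma matrix_mul_matrix_inv:
  fixes A :: "'a::field^'n^'n"
  assumes "invertible A"
  shows "A ** matrix_inv A = mat 1"
  using assms someI_ex[of "\<lambda>A'. A ** A' = mat 1 \<and> A' ** A = mat 1"]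
  unfolding invertible_def matrix_inv_def by blast

definition gram_coeffs :: "('n::finite \<Rightarrow> real \<Rightarrow> complex) \<Rightarrow> (real \<Rightarrow> complex) \<Rightarrow> complex^'n" where
  "gram_coeffs \<phi> f = matrix_inv (gram_matrix \<phi>) *v (\<chi> k. inner_L2 (\<phi> k) f)"

definition L2_projection ::
    "('n::finite \<Rightarrow> real \<Rightarrow> complex) \<Rightarrow> (real \<Rightarrow> complex) \<Rightarrow> real \<Rightarrow> complex" where
  "L2_projection \<phi> f t = (\<Sum>l\<in>UNIV. cnj (gram_coeffs \<phi> f $ l) * \<phi> l t)"

lemma square_integrable_L2_projection:
  "(\<And>k. square_integrable (\<phi> k)) \<Longrightarrow> square_integrable (L2_projection \<phi> f)"
  unfolding L2_projection_def[abs_def]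
  by (intro square_integrable_sum square_integrable_cmult) auto

lemma inner_L2_projection_left:
  assumes sq: "\<And>k. square_integrable (\<phi> k)" and indep: "lin_indep_L2 \<phi>"
  shows "inner_L2 (L2_projection \<phi> f) (\<phi> k) = inner_L2 f (\<phi> k)"
proof -
  let ?G = "gram_matrix \<phi>" and ?v = "gram_coeffs \<phi> f"
  have "?G *v ?v = (\<chi> k. inner_L2 (\<phi> k) f)"
    using matrix_mul_matrix_inv[OF invertible_gram_matrix[OF sq indep]]
    by (simp add: gram_coeffs_def matrix_vector_mul_assoc)
  hence Gv: "(\<Sum>l\<in>UNIV. ?G $ k $ l * ?v $ l) = inner_L2 (\<phi> k) f"
    by (simp add: matrix_vector_mult_def vec_eq_iff)
  have "inner_L2 (L2_projection \<phi> f) (\<phi> k) = (\<Sum>l\<in>UNIV. cnj (?v $ l) * inner_L2 (\<phi> l) (\<phi> k))"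
    unfolding L2_projection_def[abs_def] by (rule inner_L2_sum_left) (auto simp: sq)
  also have "\<dots> = cnj (\<Sum>l\<in>UNIV. ?G $ k $ l * ?v $ l)"
    by (simp add: gram_matrix_def cnj_inner_L2 mult.commute)
  finally show ?thesis by (simp add: Gv cnj_inner_L2)
qed

lemma inner_L2_residual_span:
  assumes sq: "\<And>k. square_integrable (\<phi> k)" and indep: "lin_indep_L2 \<phi>"
    and f: "square_integrable f"
  shows "inner_L2 (\<lambda>t. f t - L2_projection \<phi> f t) (\<lambda>t. \<Sum>l\<in>UNIV. c l * \<phi> l t) = 0"
proof -
  have "inner_L2 (\<lambda>t. f t - L2_projection \<phi> f t) (\<phi> l) = 0" for l
    by (simp add: inner_L2_diff_left f square_integrable_L2_projection sq
        inner_L2_projection_left[OF sq indep])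
  thus ?thesis
    by (subst inner_L2_sum_right)
      (auto intro: square_integrable_diff square_integrable_L2_projection f sq)
qed

lemma L2_norm_residual:
  assumes sq: "\<And>k. square_integrable (\<phi> k)" and indep: "lin_indep_L2 \<phi>"
    and f: "square_integrable f"
  shows "(LINT t|lborel. (cmod (f t - L2_projection \<phi> f t))\<^sup>2)
    = (LINT t|lborel. (cmod (f t))\<^sup>2) - Re (\<Sum>k\<in>UNIV. gram_coeffs \<phi> f $ k * cnj (inner_L2 (\<phi> k) f))"
proof -
  let ?d = "\<lambda>t. f t - L2_projection \<phi> f t" and ?v = "gram_coeffs \<phi> f"
  have sqP: "square_integrable (L2_projection \<phi> f)" by (rule square_integrable_L2_projection[OF sq])
  have sqd: "square_integrable ?d" by (rule square_integrable_diff[OF f sqP])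
  have "inner_L2 ?d ?d = inner_L2 ?d f - inner_L2 ?d (L2_projection \<phi> f)"
    by (rule inner_L2_diff_right[OF sqd f sqP])
  also have "inner_L2 ?d (L2_projection \<phi> f) = 0"
    using inner_L2_residual_span[OF sq indep f, of "\<lambda>l. cnj (?v $ l)"]
    unfolding L2_projection_def[abs_def] .
  also have "inner_L2 ?d f - 0 = inner_L2 f f - inner_L2 (L2_projection \<phi> f) f"
    using inner_L2_diff_left[OF f sqP f] by simp
  also have "inner_L2 (L2_projection \<phi> f) f = (\<Sum>l\<in>UNIV. cnj (?v $ l) * inner_L2 (\<phi> l) f)"
    unfolding L2_projection_def[abs_def] by (rule inner_L2_sum_left) (auto simp: sq f)
  also have "\<dots> = cnj (\<Sum>k\<in>UNIV. ?v $ k * cnj (inner_L2 (\<phi> k) f))"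
    by simp
  finally have "complex_of_real (LINT t|lborel. (cmod (?d t))\<^sup>2)
      = complex_of_real (LINT t|lborel. (cmod (f t))\<^sup>2) - cnj (\<Sum>k\<in>UNIV. ?v $ k * cnj (inner_L2 (\<phi> k) f))"
    by (simp add: inner_L2_self)
  from arg_cong[OF this, of Re] show ?thesis by simp
qed

lemma AE_residual_eq_0_if_AE_in_span:
  assumes sq: "\<And>k. square_integrable (\<phi> k)" and indep: "lin_indep_L2 \<phi>"
    and f: "square_integrable f" and span: "AE t in lborel. f t = (\<Sum>k\<in>UNIV. \<beta> k * \<phi> k t)"
  shows "AE t in lborel. f t - L2_projection \<phi> f t = 0"
proof -
  let ?d = "\<lambda>t. f t - L2_projection \<phi> f t"
  define \<gamma> where "\<gamma> k = \<beta> k - cnj (gram_coeffs \<phi> f $ k)" for k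
  have sqd: "square_integrable ?d"
    by (rule square_integrable_diff[OF f square_integrable_L2_projection[OF sq]])
  have "AE t in lborel. ?d t = (\<Sum>k\<in>UNIV. \<gamma> k * \<phi> k t)"
    using span by eventually_elim (simp add: \<gamma>_def L2_projection_def left_diff_distrib sum_subtractf)
  hence "inner_L2 ?d ?d = inner_L2 ?d (\<lambda>t. \<Sum>k\<in>UNIV. \<gamma> k * \<phi> k t)"
    by (intro inner_L2_cong_AE_right sqd square_integrable_sum square_integrable_cmult sq) auto
  also have "\<dots> = 0" by (rule inner_L2_residual_span[OF sq indep f])
  finally show ?thesis by (simp add: inner_L2_self L2_norm_eq_0_iff_AE[OF sqd])
qed

lemma lin_indep_L2_extend_iff:
  fixes \<phi> :: "'n::finite \<Rightarrow> real \<Rightarrow> complex"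
  assumes sq: "\<And>k. square_integrable (\<phi> k)" and indep: "lin_indep_L2 \<phi>"
    and f: "square_integrable f"
  shows "lin_indep_L2 (case_option f \<phi>) \<longleftrightarrow> \<not> (AE t in lborel. f t - L2_projection \<phi> f t = 0)"
proof
  assume indep': "lin_indep_L2 (case_option f \<phi>)"
  define c where "c x = (case x of None \<Rightarrow> 1 | Some l \<Rightarrow> - cnj (gram_coeffs \<phi> f $ l))" for x
  have comb: "(\<Sum>x\<in>UNIV. c x * case_option f \<phi> x t) = f t - L2_projection \<phi> f t" for t
    by (simp add: c_def sum_UNIV_option L2_projection_def sum_negf)
  show "\<not> (AE t in lborel. f t - L2_projection \<phi> f t = 0)"
  proof
    assume "AE t in lborel. f t - L2_projection \<phi> f t = 0"
    hence "AE t in lborel. (\<Sum>x\<in>UNIV. c x * case_option f \<phi> x t) = 0" by (simp add: comb)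
    thus False using lin_indep_L2D[OF indep', of c None] by (simp add: c_def)
  qed
next
  assume nonzero: "\<not> (AE t in lborel. f t - L2_projection \<phi> f t = 0)"
  show "lin_indep_L2 (case_option f \<phi>)"
    unfolding lin_indep_L2_def
  proof (intro allI impI)
    fix c :: "'n option \<Rightarrow> complex" and x :: "'n option"
    assume "AE t in lborel. (\<Sum>x\<in>UNIV. c x * case_option f \<phi> x t) = 0"
    hence comb: "AE t in lborel. c None * f t + (\<Sum>k\<in>UNIV. c (Some k) * \<phi> k t) = 0"
      by (simp add: sum_UNIV_option)
    have "c None = 0"
    proof (rule ccontr)
      assume c0: "c None \<noteq> 0"
      have "AE t in lborel. f t = (\<Sum>k\<in>UNIV. - c (Some k) / c None * \<phi> k t)"
        using comb by eventually_elim
          (use c0 in \<open>simp add: sum_divide_distrib[symmetric] sum_negf field_simps add_eq_0_iff\<close>)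
      with nonzero show False using AE_residual_eq_0_if_AE_in_span[OF sq indep f] by metis
    qed
    moreover from this comb have "AE t in lborel. (\<Sum>k\<in>UNIV. c (Some k) * \<phi> k t) = 0"
      by simp
    hence "\<forall>k. c (Some k) = 0"
      using lin_indep_L2D[OF indep, of "\<lambda>k. c (Some k)"] by simp
    ultimately show "c x = 0" by (cases x) auto
  qed
qed

section \<open>Time-frequency shifts and the function \<open>F\<close>\<close>

definition e2pi :: "real \<Rightarrow> complex" where
  "e2pi r = exp (2 * complex_of_real pi * \<i> * complex_of_real r)"

lemma e2pi_add: "e2pi r * e2pi s = e2pi (r + s)"
  by (simp add: e2pi_def exp_add[symmetric] algebra_simps)

lemma cnj_e2pi: "cnj (e2pi r) = e2pi (- r)"
  by (simp add: e2pi_def exp_cnj)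

lemma exp_minus_eq_e2pi: "exp (- 2 * complex_of_real pi * \<i> * complex_of_real r) = e2pi (- r)"
  by (simp add: e2pi_def)

lemma norm_e2pi [simp]: "cmod (e2pi r) = 1"
proof -
  have "e2pi r = exp (\<i> * complex_of_real (2 * pi * r))" by (simp add: e2pi_def algebra_simps)
  thus ?thesis by (simp only: norm_exp_i_times)
qed

lemma borel_measurable_e2pi [measurable]:
  "f \<in> borel_measurable M \<Longrightarrow> (\<lambda>t. e2pi (f t)) \<in> borel_measurable M"
  unfolding e2pi_def by measurable

lemma e2pi_minus_half: "e2pi (- (1/2)) = -1"
proof -
  have "e2pi (- (1/2)) = cis (- pi)" by (simp add: e2pi_def cis_conv_exp algebra_simps)
  thus ?thesis by (simp add: complex_eq_iff)
qed

lemma modulation_translation_apply: "modulation b (translation a g) t = e2pi (b * t) * g (t - a)"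
  by (simp add: modulation_def translation_def e2pi_def)

lemma square_integrable_modulation_translation:
  assumes "square_integrable g"
  shows "square_integrable (modulation b (translation a g))"
  unfolding modulation_translation_apply[abs_def]
  using square_integrable_unimodular_mult[OF square_integrable_shift[OF assms, of "- a"]] by simp

lemma L2_norm_modulation_translation:
  "(LINT t|lborel. (cmod (modulation b (translation a g) t))\<^sup>2) = (LINT t|lborel. (cmod (g t))\<^sup>2)"
  using L2_norm_shift[of g "- a"] by (simp add: modulation_translation_apply norm_mult)

lemma gabor_extend_pts:
  "gabor g (extend_pts \<Lambda> (a, b)) = case_option (modulation b (translation a g)) (gabor g \<Lambda>)"
  by (auto simp: fun_eq_iff gabor_def extend_pts_def split: option.split)

lemma gram_eq_gram_matrix: "gram g \<Lambda> = gram_matrix (gabor g \<Lambda>)"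
  by (simp add: gram_def gram_matrix_def)

lemma uvec_eq_inner_L2:
  "uvec g \<Lambda> a b $ k = inner_L2 (gabor g \<Lambda> k) (modulation b (translation a g))"
proof -
  obtain ak bk where L: "\<Lambda> k = (ak, bk)" by force
  have "inner_L2 (gabor g \<Lambda> k) (modulation b (translation a g))
      = (LINT t|lborel. e2pi (- ((b - bk) * t)) * (g (t - ak) * cnj (g (t - a))))"
    unfolding inner_L2_def gabor_def L
  proof (rule Bochner_Integration.integral_cong[OF refl])
    fix t
    have "e2pi (bk * t) * cnj (e2pi (b * t)) = e2pi (- ((b - bk) * t))"
      by (simp add: cnj_e2pi e2pi_add algebra_simps)
    thus "modulation (snd (ak, bk)) (translation (fst (ak, bk)) g) t
        * cnj (modulation b (translation a g) t) = e2pi (- ((b - bk) * t)) * (g (t - ak) * cnj (g (t - a)))"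
      by (simp add: modulation_translation_apply mult_ac)
  qed
  also have "\<dots> = (LINT t|lborel. (\<lambda>t. e2pi (- ((b - bk) * t)) * (g (t - ak) * cnj (g (t - a)))) (t + ak))"
    by (rule lborel_integral_shift[symmetric])
  also have "\<dots> = (LINT t|lborel. e2pi (- (ak * (b - bk)))
      * (g t * cnj (g (t - (a - ak))) * e2pi (- ((b - bk) * t))))"
  proof (rule Bochner_Integration.integral_cong[OF refl])
    fix t
    have "e2pi (- ((b - bk) * (t + ak))) = e2pi (- (ak * (b - bk))) * e2pi (- ((b - bk) * t))"
      by (simp add: e2pi_add algebra_simps)
    thus "(\<lambda>t. e2pi (- ((b - bk) * t)) * (g (t - ak) * cnj (g (t - a)))) (t + ak)
        = e2pi (- (ak * (b - bk))) * (g t * cnj (g (t - (a - ak))) * e2pi (- ((b - bk) * t)))"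
      by (simp add: mult_ac diff_diff_eq2)
  qed
  also have "\<dots> = e2pi (- (ak * (b - bk)))
      * (LINT t|lborel. g t * cnj (g (t - (a - ak))) * e2pi (- ((b - bk) * t)))"
    by simp
  also have "\<dots> = uvec g \<Lambda> a b $ k"
    unfolding uvec_def stft_def exp_minus_eq_e2pi by (simp add: L)
  finally show ?thesis ..
qed

lemma lin_indep_L2_gabor_extend_iff:
  assumes g: "square_integrable g" and norm_g: "(LINT t|lborel. (cmod (g t))\<^sup>2) = 1"
    and indep: "lin_indep_L2 (gabor g \<Lambda>)"
  shows "lin_indep_L2 (gabor g (extend_pts \<Lambda> (a, b))) \<longleftrightarrow> Re (Ffun g \<Lambda> a b) < 1"
proof -
  let ?f = "modulation b (translation a g)" and ?\<phi> = "gabor g \<Lambda>"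
  let ?d = "\<lambda>t. ?f t - L2_projection ?\<phi> ?f t"
  have sq: "square_integrable (?\<phi> k)" for k
    unfolding gabor_def by (rule square_integrable_modulation_translation[OF g])
  have f: "square_integrable ?f" by (rule square_integrable_modulation_translation[OF g])
  have d: "square_integrable ?d" by (intro square_integrable_diff f square_integrable_L2_projection sq)
  have "uvec g \<Lambda> a b = (\<chi> k. inner_L2 (?\<phi> k) ?f)"
    by (simp add: vec_eq_iff uvec_eq_inner_L2)
  hence "Ffun g \<Lambda> a b = (\<Sum>k\<in>UNIV. gram_coeffs ?\<phi> ?f $ k * cnj (inner_L2 (?\<phi> k) ?f))"
    by (simp add: Ffun_def Let_def gram_coeffs_def gram_eq_gram_matrix)
  hence residual: "(LINT t|lborel. (cmod (?d t))\<^sup>2) = 1 - Re (Ffun g \<Lambda> a b)"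
    using L2_norm_residual[OF sq indep f] by (simp add: L2_norm_modulation_translation norm_g)
  have "lin_indep_L2 (gabor g (extend_pts \<Lambda> (a, b))) \<longleftrightarrow> \<not> (AE t in lborel. ?d t = 0)"
    unfolding gabor_extend_pts by (rule lin_indep_L2_extend_iff[OF sq indep f])
  also have "\<dots> \<longleftrightarrow> (LINT t|lborel. (cmod (?d t))\<^sup>2) \<noteq> 0"
    using L2_norm_eq_0_iff_AE[OF d] by simp
  also have "\<dots> \<longleftrightarrow> Re (Ffun g \<Lambda> a b) < 1"
    using residual Bochner_Integration.integral_nonneg[of lborel "\<lambda>t. (cmod (?d t))\<^sup>2"] by auto
  finally show ?thesis .
qed

section \<open>Continuity of translation in \<open>L\<^sup>2(\<real>)\<close>\<close>

definition L2_shift_continuous :: "(real \<Rightarrow> complex) \<Rightarrow> bool" where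
  "L2_shift_continuous f \<longleftrightarrow>
     (\<forall>e>0. \<exists>d>0. \<forall>\<delta>. \<bar>\<delta>\<bar> < d \<longrightarrow> (LINT t|lborel. (cmod (f (t + \<delta>) - f t))\<^sup>2) < e)"

lemma L2_shift_continuousD:
  "L2_shift_continuous f \<Longrightarrow> e > 0
    \<Longrightarrow> \<exists>d>0. \<forall>\<delta>. \<bar>\<delta>\<bar> < d \<longrightarrow> (LINT t|lborel. (cmod (f (t + \<delta>) - f t))\<^sup>2) < e"
  unfolding L2_shift_continuous_def by blast

lemma L2_shift_continuous_0: "L2_shift_continuous (\<lambda>t. 0)"
  unfolding L2_shift_continuous_def by (auto intro: exI[of _ 1])

lemma L2_shift_continuous_cmult:
  assumes "L2_shift_continuous f"
  shows "L2_shift_continuous (\<lambda>t. c * f t)"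
proof (cases "c = 0")
  case True
  thus ?thesis using L2_shift_continuous_0 by simp
next
  case False
  have scale: "(LINT t|lborel. (cmod (c * f (t + \<delta>) - c * f t))\<^sup>2)
      = (cmod c)\<^sup>2 * (LINT t|lborel. (cmod (f (t + \<delta>) - f t))\<^sup>2)" for \<delta>
    by (simp add: right_diff_distrib[symmetric] norm_mult power_mult_distrib)
  show ?thesis
    unfolding L2_shift_continuous_def scale
  proof (intro allI impI)
    fix e :: real assume "e > 0"
    with False obtain d where "d > 0"
      "\<And>\<delta>. \<bar>\<delta>\<bar> < d \<Longrightarrow> (LINT t|lborel. (cmod (f (t + \<delta>) - f t))\<^sup>2) < e / (cmod c)\<^sup>2"
      using L2_shift_continuousD[OF assms, of "e / (cmod c)\<^sup>2"] by auto
    with False show "\<exists>d>0. \<forall>\<delta>. \<bar>\<delta>\<bar> < d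
        \<longrightarrow> (cmod c)\<^sup>2 * (LINT t|lborel. (cmod (f (t + \<delta>) - f t))\<^sup>2) < e"
      by (auto simp: pos_less_divide_eq mult.commute)
  qed
qed

lemma L2_shift_continuous_add:
  assumes f: "square_integrable f" "L2_shift_continuous f"
    and h: "square_integrable h" "L2_shift_continuous h"
  shows "L2_shift_continuous (\<lambda>t. f t + h t)"
  unfolding L2_shift_continuous_def
proof (intro allI impI)
  fix e :: real assume "e > 0"
  then obtain d1 d2 where d: "d1 > 0" "d2 > 0"
    "\<And>\<delta>. \<bar>\<delta>\<bar> < d1 \<Longrightarrow> (LINT t|lborel. (cmod (f (t + \<delta>) - f t))\<^sup>2) < e / 4"
    "\<And>\<delta>. \<bar>\<delta>\<bar> < d2 \<Longrightarrow> (LINT t|lborel. (cmod (h (t + \<delta>) - h t))\<^sup>2) < e / 4"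
    using L2_shift_continuousD[OF f(2), of "e/4"] L2_shift_continuousD[OF h(2), of "e/4"] by auto
  have bound: "(LINT t|lborel. (cmod (f (t + \<delta>) + h (t + \<delta>) - (f t + h t)))\<^sup>2)
      \<le> 2 * (LINT t|lborel. (cmod (f (t + \<delta>) - f t))\<^sup>2) + 2 * (LINT t|lborel. (cmod (h (t + \<delta>) - h t))\<^sup>2)"
    for \<delta>
    using L2_norm_add_le[of "\<lambda>t. f (t + \<delta>) - f t" "\<lambda>t. h (t + \<delta>) - h t"]
    by (simp add: square_integrable_diff square_integrable_shift f h algebra_simps)
  show "\<exists>d>0. \<forall>\<delta>. \<bar>\<delta>\<bar> < d
      \<longrightarrow> (LINT t|lborel. (cmod (f (t + \<delta>) + h (t + \<delta>) - (f t + h t)))\<^sup>2) < e"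
  proof (intro exI[of _ "min d1 d2"] conjI allI impI)
    fix \<delta> :: real assume "\<bar>\<delta>\<bar> < min d1 d2"
    thus "(LINT t|lborel. (cmod (f (t + \<delta>) + h (t + \<delta>) - (f t + h t)))\<^sup>2) < e"
      using bound[of \<delta>] d(3)[of \<delta>] d(4)[of \<delta>] by linarith
  qed (use d in simp)
qed

lemma L2_shift_continuous_sum:
  assumes "finite I" "\<And>i. i \<in> I \<Longrightarrow> square_integrable (f i) \<and> L2_shift_continuous (f i)"
  shows "L2_shift_continuous (\<lambda>t. \<Sum>i\<in>I. f i t)"
  using assms
proof (induction I rule: finite_induct)
  case empty
  thus ?case using L2_shift_continuous_0 by simp
next
  case (insert x F)
  thus ?case
    by (simp add: L2_shift_continuous_add square_integrable_sum)
qed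

lemma square_integrable_indicator:
  assumes "S \<in> sets borel" "S \<subseteq> {-M..M}"
  shows "square_integrable (\<lambda>t. indicator S t :: complex)"
proof -
  have "emeasure lborel S \<le> emeasure lborel {-M..M}" by (rule emeasure_mono[OF assms(2)]) simp
  hence "integrable lborel (indicator S :: real \<Rightarrow> real)"
    using assms(1) emeasure_compact_finite[of "{-M..M}"] by (simp add: le_less_trans)
  moreover have "(\<lambda>t. (cmod (indicator S t :: complex))\<^sup>2) = indicator S"
    by (auto simp: indicator_def)
  ultimately show ?thesis using assms(1) by (simp add: square_integrable_def)
qed

lemma lborel_compact_open_sandwich:
  fixes A :: "real set"
  assumes A: "A \<in> sets borel" "A \<subseteq> {-M..M}" and e: "e > 0"
  obtains T U where "compact T" "T \<subseteq> A" "open U" "A \<subseteq> U" "emeasure lborel (U - T) < ennreal e"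
proof -
  obtain U where U: "open U" "A \<subseteq> U" "emeasure lborel (U - A) < ennreal (e/2)"
    using outer_regular_lborel[OF A(1), of "e/2"] e by auto
  obtain U' where U': "open U'" "- A \<subseteq> U'" "emeasure lborel (U' - (- A)) < ennreal (e/2)"
    using outer_regular_lborel[of "- A" "e/2"] A(1) e by auto
  define T where "T = - U'"
  have T: "closed T" "T \<subseteq> A" using U' by (auto simp: T_def)
  have "{-M..M} \<inter> T = T" using T A(2) by auto
  hence "compact T" using compact_Int_closed[of "{-M..M}" T] T(1) by simp
  moreover have "emeasure lborel (U - T) \<le> emeasure lborel (U - A) + emeasure lborel (A - T)"
    by (rule order_trans[OF emeasure_mono emeasure_subadditive]) (use U T A in auto)
  moreover have "\<dots> < ennreal (e/2 + e/2)"
    using add_mono_ennreal[OF U(3) U'(3)] by (simp add: T_def Diff_eq Int_commute)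
  ultimately show ?thesis using that U T by auto
qed

lemma L2_shift_continuous_indicator:
  assumes A: "A \<in> sets borel" "A \<subseteq> {-M..M}"
  shows "L2_shift_continuous (\<lambda>t. indicator A t :: complex)"
  unfolding L2_shift_continuous_def
proof (intro allI impI)
  fix e :: real assume e: "e > 0"
  obtain T U where T: "compact T" "T \<subseteq> A" and U: "open U" "A \<subseteq> U"
    and emUT: "emeasure lborel (U - T) < ennreal (e/2)"
    using lborel_compact_open_sandwich[OF A half_gt_zero[OF e]] .
  \<comment> \<open>shifts by less than \<open>dist T (- U)\<close> keep \<open>T\<close> inside \<open>U\<close>, so they only move \<open>A\<close> within \<open>U - T\<close>\<close>
  have "\<exists>d>0. \<forall>x\<in>T. \<forall>y\<in>- U. d \<le> dist x y"
    by (rule separate_compact_closed) (use T U in auto)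
  then obtain d where d: "d > 0" "\<And>x y. x \<in> T \<Longrightarrow> y \<notin> U \<Longrightarrow> d \<le> dist x y" by auto
  have mUT: "measure lborel (U - T) < e/2"
    using emUT e by (metis Sigma_Algebra.measure_def enn2real_less_iff measure_zero_top
      order_le_neq_trans top_greatest half_gt_zero)
  have intUT: "integrable lborel (indicator (U - T) :: real \<Rightarrow> real)"
    using U T emUT by (intro integrable_real_indicator) (auto simp: compact_imp_closed less_top[symmetric])
  show "\<exists>d>0. \<forall>\<delta>. \<bar>\<delta>\<bar> < d
      \<longrightarrow> (LINT t|lborel. (cmod (indicator A (t + \<delta>) - indicator A t :: complex))\<^sup>2) < e"
  proof (intro exI[of _ d] conjI allI impI d(1))
    fix \<delta> :: real assume \<delta>: "\<bar>\<delta>\<bar> < d"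
    have shift_in_U: "x + \<delta>' \<in> U" if "x \<in> T" "\<bar>\<delta>'\<bar> < d" for x \<delta>'
      using d(2)[OF that(1), of "x + \<delta>'"] that(2) by (force simp: dist_real_def)
    have "t \<in> U - T \<or> t + \<delta> \<in> U - T" if "t \<in> A \<longleftrightarrow> t + \<delta> \<notin> A" for t
    proof (cases "t \<in> A")
      case True
      thus ?thesis using that shift_in_U[of t \<delta>] \<delta> U(2) T(2) by blast
    next
      case False
      thus ?thesis using that shift_in_U[of "t + \<delta>" "- \<delta>"] \<delta> U(2) T(2) by auto
    qed
    hence pw: "(cmod (indicator A (t + \<delta>) - indicator A t :: complex))\<^sup>2
        \<le> indicator (U - T) t + indicator (U - T) (t + \<delta>)" for t
      by (cases "t \<in> A \<longleftrightarrow> t + \<delta> \<in> A") (auto simp: indicator_def)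
    have int2: "integrable lborel (\<lambda>t. indicator (U - T) t + indicator (U - T) (t + \<delta>) :: real)"
      using intUT lborel_integrable_shift_iff[of "indicator (U - T) :: real \<Rightarrow> real" \<delta>] by simp
    have "(LINT t|lborel. (cmod (indicator A (t + \<delta>) - indicator A t :: complex))\<^sup>2)
        \<le> (LINT t|lborel. indicator (U - T) t + indicator (U - T) (t + \<delta>) :: real)"
      by (rule integral_mono[OF Bochner_Integration.integrable_bound[OF int2] int2 pw])
        (use A pw in \<open>auto intro!: AE_I2\<close>)
    also have "\<dots> = 2 * measure lborel (U - T)"
      using intUT lborel_integrable_shift_iff[of "indicator (U - T) :: real \<Rightarrow> real" \<delta>]
        lborel_integral_shift[of "indicator (U - T) :: real \<Rightarrow> real" \<delta>] by simp
    finally show "(LINT t|lborel. (cmod (indicator A (t + \<delta>) - indicator A t :: complex))\<^sup>2) < e"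
      using mUT by simp
  qed
qed

lemma square_integrable_L2_shift_continuous_simple:
  assumes sf: "simple_function lborel s" and supp: "\<And>t. s t \<noteq> 0 \<Longrightarrow> t \<in> {-M..M}"
  shows "square_integrable s" "L2_shift_continuous s"
proof -
  define R where "R = range s"
  have finR: "finite R" using sf unfolding R_def simple_function_def by simp
  have rep: "s = (\<lambda>t. \<Sum>y\<in>R. y * indicator (s -` {y}) t)"
  proof
    fix t
    have "(\<Sum>y\<in>R. y * indicator (s -` {y}) t) = (\<Sum>y\<in>R. if s t = y then s t else 0)"
      by (rule sum.cong) (auto simp: indicator_def)
    thus "s t = (\<Sum>y\<in>R. y * indicator (s -` {y}) t)" using finR by (simp add: R_def)
  qed
  have level_set: "square_integrable (\<lambda>t. y * indicator (s -` {y}) t)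
      \<and> L2_shift_continuous (\<lambda>t. y * indicator (s -` {y}) t)" for y
  proof (cases "y = 0")
    case True
    thus ?thesis using L2_shift_continuous_0 by (simp add: square_integrable_def)
  next
    case False
    have "s -` {y} \<in> sets borel" using simple_functionD(2)[OF sf, of "{y}"] by simp
    moreover have "s -` {y} \<subseteq> {-M..M}" using supp False by auto
    ultimately show ?thesis
      by (intro conjI square_integrable_cmult square_integrable_indicator
          L2_shift_continuous_cmult L2_shift_continuous_indicator)
  qed
  show "square_integrable s"
    by (subst rep, rule square_integrable_sum[OF finR]) (use level_set in auto)
  show "L2_shift_continuous s"
    by (subst rep, rule L2_shift_continuous_sum[OF finR]) (use level_set in auto)
qed

lemma L2_shift_continuous_approx:
  assumes g: "square_integrable g"
    and approx: "\<And>e. e > 0 \<Longrightarrow> \<exists>s. square_integrable s \<and> L2_shift_continuous s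
                   \<and> (LINT t|lborel. (cmod (g t - s t))\<^sup>2) < e"
  shows "L2_shift_continuous g"
  unfolding L2_shift_continuous_def
proof (intro allI impI)
  fix e :: real assume e: "e > 0"
  obtain s where s: "square_integrable s" "L2_shift_continuous s"
    "(LINT t|lborel. (cmod (g t - s t))\<^sup>2) < e / 10"
    using approx[of "e/10"] e by auto
  obtain d where d: "d > 0"
    "\<And>\<delta>. \<bar>\<delta>\<bar> < d \<Longrightarrow> (LINT t|lborel. (cmod (s (t + \<delta>) - s t))\<^sup>2) < e / 10"
    using L2_shift_continuousD[OF s(2), of "e/10"] e by auto
  show "\<exists>d>0. \<forall>\<delta>. \<bar>\<delta>\<bar> < d \<longrightarrow> (LINT t|lborel. (cmod (g (t + \<delta>) - g t))\<^sup>2) < e"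
  proof (intro exI[of _ d] conjI allI impI d(1))
    fix \<delta> :: real assume \<delta>: "\<bar>\<delta>\<bar> < d"
    have sq: "square_integrable (\<lambda>t. g (t + \<delta>) - s (t + \<delta>))" "square_integrable (\<lambda>t. s (t + \<delta>) - s t)"
      "square_integrable (\<lambda>t. s t - g t)"
      by (intro square_integrable_diff square_integrable_shift g s)+
    have "(LINT t|lborel. (cmod (g (t + \<delta>) - g t))\<^sup>2)
        \<le> 2 * (LINT t|lborel. (cmod (g (t + \<delta>) - s (t + \<delta>)))\<^sup>2)
          + 2 * (LINT t|lborel. (cmod (s (t + \<delta>) - s t + (s t - g t)))\<^sup>2)"
      using L2_norm_add_le[OF sq(1) square_integrable_add[OF sq(2,3)]] by simp
    moreover have "(LINT t|lborel. (cmod (s (t + \<delta>) - s t + (s t - g t)))\<^sup>2)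
        \<le> 2 * (LINT t|lborel. (cmod (s (t + \<delta>) - s t))\<^sup>2) + 2 * (LINT t|lborel. (cmod (s t - g t))\<^sup>2)"
      by (rule L2_norm_add_le[OF sq(2,3)])
    moreover have "(LINT t|lborel. (cmod (g (t + \<delta>) - s (t + \<delta>)))\<^sup>2) = (LINT t|lborel. (cmod (g t - s t))\<^sup>2)"
      by (rule lborel_integral_shift[of "\<lambda>t. (cmod (g t - s t))\<^sup>2"])
    moreover have "(LINT t|lborel. (cmod (s t - g t))\<^sup>2) = (LINT t|lborel. (cmod (g t - s t))\<^sup>2)"
      by (simp add: norm_minus_commute)
    ultimately show "(LINT t|lborel. (cmod (g (t + \<delta>) - g t))\<^sup>2) < e"
      using s(3) d(2)[OF \<delta>] by linarith
  qed
qed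

lemma tendsto_L2_tail:
  assumes g: "square_integrable g"
  shows "(\<lambda>n::nat. LINT t|lborel. (cmod (g t))\<^sup>2 * indicator {t. real n < \<bar>t\<bar>} t) \<longlonglongrightarrow> 0"
proof -
  have "(\<lambda>n::nat. LINT t|lborel. (cmod (g t))\<^sup>2 * indicator {t. real n < \<bar>t\<bar>} t)
      \<longlonglongrightarrow> (LINT (t::real)|lborel. (0::real))"
  proof (rule integral_dominated_convergence[where w = "\<lambda>t. (cmod (g t))\<^sup>2"])
    show "AE t in lborel. (\<lambda>n. (cmod (g t))\<^sup>2 * indicator {t. real n < \<bar>t\<bar>} t) \<longlonglongrightarrow> 0"
    proof (rule AE_I2, rule tendsto_eventually)
      fix t :: real
      show "\<forall>\<^sub>F n in sequentially. (cmod (g t))\<^sup>2 * indicator {t. real n < \<bar>t\<bar>} t = 0"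
        unfolding eventually_sequentially
        by (rule exI[of _ "nat \<lceil>\<bar>t\<bar>\<rceil>"]) (auto simp: indicator_def)
    qed
  qed (use g in \<open>auto intro!: AE_I2 simp: indicator_def square_integrable_def\<close>)
  thus ?thesis by simp
qed

lemma simple_function_L2_approx:
  assumes h: "square_integrable h" and supp: "\<And>t. h t \<noteq> 0 \<Longrightarrow> t \<in> {-M..M}" and e: "e > 0"
  obtains s where "simple_function lborel s" "\<And>t. s t \<noteq> 0 \<Longrightarrow> t \<in> {-M..M}"
    "(LINT t|lborel. (cmod (h t - s t))\<^sup>2) < e"
proof -
  have hm: "h \<in> borel_measurable lborel" using h by (simp add: square_integrable_def)
  obtain F where F: "\<And>i. simple_function lborel (F i)" "\<And>x. (\<lambda>i. F i x) \<longlonglongrightarrow> h x"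
    "\<And>i x. dist (F i x) 0 \<le> 2 * dist (h x) 0"
    using borel_measurable_implies_sequence_metric[OF hm, of 0] by auto
  have Fm: "F i \<in> borel_measurable lborel" for i
    using borel_measurable_simple_function[OF F(1)] by simp
  have bound: "(cmod (h t - F i t))\<^sup>2 \<le> 9 * (cmod (h t))\<^sup>2" for i t
  proof -
    have "cmod (h t - F i t) \<le> 3 * cmod (h t)"
      using norm_triangle_ineq4[of "h t" "F i t"] F(3)[of i t] by simp
    thus ?thesis using power_mono[of "cmod (h t - F i t)" "3 * cmod (h t)" 2]
      by (simp add: power_mult_distrib)
  qed
  have "(\<lambda>i. LINT t|lborel. (cmod (h t - F i t))\<^sup>2) \<longlonglongrightarrow> (LINT (t::real)|lborel. (0::real))"
  proof (rule integral_dominated_convergence[where w = "\<lambda>t. 9 * (cmod (h t))\<^sup>2"])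
    show "AE t in lborel. (\<lambda>i. (cmod (h t - F i t))\<^sup>2) \<longlonglongrightarrow> 0"
    proof (rule AE_I2)
      fix t
      have "(\<lambda>i. (cmod (h t - F i t))\<^sup>2) \<longlonglongrightarrow> (cmod (h t - h t))\<^sup>2"
        by (intro tendsto_intros F(2))
      thus "(\<lambda>i. (cmod (h t - F i t))\<^sup>2) \<longlonglongrightarrow> 0" by simp
    qed
  qed (use h Fm bound in \<open>auto simp: square_integrable_def\<close>)
  hence "(\<lambda>i. LINT t|lborel. (cmod (h t - F i t))\<^sup>2) \<longlonglongrightarrow> 0" by simp
  hence "\<forall>\<^sub>F i in sequentially. (LINT t|lborel. (cmod (h t - F i t))\<^sup>2) < e"
    by (rule order_tendstoD(2)) (rule e)
  then obtain i where i: "(LINT t|lborel. (cmod (h t - F i t))\<^sup>2) < e"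
    unfolding eventually_sequentially by blast
  have "F i t \<noteq> 0 \<Longrightarrow> t \<in> {-M..M}" for t
    using supp[of t] F(3)[of i t] by fastforce
  thus ?thesis using that[OF F(1)[of i] _ i] by blast
qed

lemma square_integrable_imp_L2_shift_continuous:
  assumes g: "square_integrable g"
  shows "L2_shift_continuous g"
proof (rule L2_shift_continuous_approx[OF g])
  fix e :: real assume e: "e > 0"
  have "\<forall>\<^sub>F n in sequentially. (LINT t|lborel. (cmod (g t))\<^sup>2 * indicator {t. real n < \<bar>t\<bar>} t) < e / 4"
    by (rule order_tendstoD(2)[OF tendsto_L2_tail[OF g]]) (use e in simp)
  then obtain N :: nat where N: "(LINT t|lborel. (cmod (g t))\<^sup>2 * indicator {t. real N < \<bar>t\<bar>} t) < e / 4"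
    unfolding eventually_sequentially by blast
  define gN where "gN = (\<lambda>t. indicator {- real N..real N} t * g t)"
  have gN: "square_integrable gN"
    unfolding gN_def by (rule square_integrable_indicator_mult[OF g]) simp
  have "(cmod (g t - gN t))\<^sup>2 = (cmod (g t))\<^sup>2 * indicator {t. real N < \<bar>t\<bar>} t" for t
    by (auto simp: gN_def indicator_def)
  hence truncation: "(LINT t|lborel. (cmod (g t - gN t))\<^sup>2) < e / 4"
    using N by simp
  have supp: "gN t \<noteq> 0 \<Longrightarrow> t \<in> {- real N..real N}" for t
    by (auto simp: gN_def indicator_def)
  obtain s where s: "simple_function lborel s" "\<And>t. s t \<noteq> 0 \<Longrightarrow> t \<in> {- real N..real N}"
    "(LINT t|lborel. (cmod (gN t - s t))\<^sup>2) < e / 4"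
    by (rule simple_function_L2_approx[OF gN supp, of "e/4"]) (use e in auto)
  have "(LINT t|lborel. (cmod (g t - s t))\<^sup>2)
      \<le> 2 * (LINT t|lborel. (cmod (g t - gN t))\<^sup>2) + 2 * (LINT t|lborel. (cmod (gN t - s t))\<^sup>2)"
    using L2_norm_add_le[OF square_integrable_diff[OF g gN] square_integrable_diff[OF gN]]
      square_integrable_L2_shift_continuous_simple[OF s(1,2)] by simp
  thus "\<exists>s. square_integrable s \<and> L2_shift_continuous s \<and> (LINT t|lborel. (cmod (g t - s t))\<^sup>2) < e"
    using truncation s(3) square_integrable_L2_shift_continuous_simple[OF s(1,2)] by (intro exI[of _ s]) simp
qed

section \<open>Decay of the short-time Fourier transform\<close>

lemma stft_eq: "stft g g x y = (LINT t|lborel. g t * cnj (g (t - x)) * e2pi (- (y * t)))"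
  unfolding stft_def exp_minus_eq_e2pi ..

lemma norm_stft_le:
  "cmod (stft g g x y) \<le> (LINT t|lborel. cmod (g t) * cmod (g (t - x)))"
proof -
  have "cmod (stft g g x y) \<le> (LINT t|lborel. norm (g t * cnj (g (t - x)) * e2pi (- (y * t))))"
    unfolding stft_eq by (rule integral_norm_bound)
  thus ?thesis by (simp add: norm_mult)
qed

lemma norm_stft_le_tail:
  assumes g: "square_integrable g" and x: "2 * M < \<bar>x\<bar>" and a: "a > 0"
  shows "cmod (stft g g x y)
    \<le> a * (LINT t|lborel. (cmod (g t))\<^sup>2 * indicator {t. M < \<bar>t\<bar>} t) + (LINT t|lborel. (cmod (g t))\<^sup>2) / a"
proof -
  define r where "r = (LINT t|lborel. (cmod (g t))\<^sup>2 * indicator {t. M < \<bar>t\<bar>} t)"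
  define E where "E = (LINT t|lborel. (cmod (g t))\<^sup>2)"
  define g1 where "g1 t = indicator {t. M < \<bar>t\<bar>} t * g t" for t
  define g2 where "g2 t = g1 (t + - x)" for t
  have g1: "square_integrable g1"
    unfolding g1_def[abs_def] by (rule square_integrable_indicator_mult[OF g]) simp
  have g2: "square_integrable g2" unfolding g2_def by (rule square_integrable_shift[OF g1])
  have gx: "square_integrable (\<lambda>t. g (t + - x))" by (rule square_integrable_shift[OF g])
  have r1: "(LINT t|lborel. (cmod (g1 t))\<^sup>2) = r"
    unfolding r_def g1_def by (rule Bochner_Integration.integral_cong) (auto simp: indicator_def)
  have r2: "(LINT t|lborel. (cmod (g2 t))\<^sup>2) = r"
    unfolding g2_def using L2_norm_shift[of g1 "- x"] r1 by simp
  \<comment> \<open>since \<open>\<bar>x\<bar> > 2M\<close>, at every \<open>t\<close> one of \<open>\<bar>t\<bar>\<close>, \<open>\<bar>t - x\<bar>\<close> exceeds \<open>M\<close>\<close>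
  have pw: "cmod (g t) * cmod (g (t - x)) \<le> cmod (g1 t) * cmod (g (t + - x)) + cmod (g2 t) * cmod (g t)" for t
    using x by (cases "M < \<bar>t\<bar>") (auto simp: g1_def g2_def indicator_def mult.commute)
  have iA: "integrable lborel (\<lambda>t. cmod (g1 t) * cmod (g (t + - x)))" by (rule integrable_norm_mult[OF g1 gx])
  have iB: "integrable lborel (\<lambda>t. cmod (g2 t) * cmod (g t))" by (rule integrable_norm_mult[OF g2 g])
  have "cmod (stft g g x y) \<le> (LINT t|lborel. cmod (g t) * cmod (g (t - x)))" by (rule norm_stft_le)
  also have "\<dots> \<le> (LINT t|lborel. cmod (g1 t) * cmod (g (t + - x)) + cmod (g2 t) * cmod (g t))"
    by (rule integral_mono) (use integrable_norm_mult[OF g gx] iA iB pw in auto)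
  also have "\<dots> = (LINT t|lborel. cmod (g1 t) * cmod (g (t + - x))) + (LINT t|lborel. cmod (g2 t) * cmod (g t))"
    using iA iB by simp
  also have "\<dots> \<le> (a * r + E / a) / 2 + (a * r + E / a) / 2"
    using integral_norm_mult_le_weighted[OF g1 gx a] integral_norm_mult_le_weighted[OF g2 g a]
      r1 r2 L2_norm_shift[of g "- x"] by (simp add: E_def)
  finally show ?thesis by (simp add: r_def E_def)
qed

lemma double_stft_eq_shift_difference:
  fixes g :: "real \<Rightarrow> complex" and x y :: real
  assumes g: "square_integrable g" and y: "y \<noteq> 0"
  defines "\<phi> \<equiv> \<lambda>t. g t * cnj (g (t - x))" and "\<delta> \<equiv> 1 / (2 * y)"
  shows "2 * stft g g x y = (LINT t|lborel. (\<phi> t - \<phi> (t + \<delta>)) * e2pi (- (y * t)))"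
proof -
  define e where "e t = e2pi (- (y * t))" for t
  have i\<phi>: "integrable lborel \<phi>"
    unfolding \<phi>_def using integrable_mult_cnj[OF g square_integrable_shift[OF g, of "- x"]] by simp
  have i\<phi>e: "integrable lborel (\<lambda>t. \<phi> (t + c) * e t)" for c
    by (rule Bochner_Integration.integrable_bound[of _ "\<lambda>t. \<phi> (t + c)"])
      (use i\<phi> lborel_integrable_shift_iff[of \<phi> c] in \<open>auto simp: norm_mult e_def\<close>)
  have flip: "e (t + \<delta>) = - e t" for t
  proof -
    have "e (t + \<delta>) = e2pi (- (y * t)) * e2pi (- (1/2))"
      using y by (simp add: e_def e2pi_add \<delta>_def algebra_simps)
    thus ?thesis by (simp add: e2pi_minus_half e_def)
  qed
  have "stft g g x y = (LINT t|lborel. \<phi> t * e t)" by (simp add: stft_eq \<phi>_def e_def)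
  moreover have "(LINT t|lborel. \<phi> t * e t) = - (LINT t|lborel. \<phi> (t + \<delta>) * e t)"
    using lborel_integral_shift[of "\<lambda>t. \<phi> t * e t" \<delta>] by (simp add: flip)
  ultimately show ?thesis
    using i\<phi>e[of 0] i\<phi>e[of \<delta>] by (simp add: left_diff_distrib e_def)
qed

lemma norm_stft_le_shift:
  assumes g: "square_integrable g" and y: "y \<noteq> 0" and a: "a > 0"
  shows "2 * cmod (stft g g x y)
    \<le> a * (LINT t|lborel. (cmod (g (t + 1 / (2 * y)) - g t))\<^sup>2) + (LINT t|lborel. (cmod (g t))\<^sup>2) / a"
proof -
  define \<delta> where "\<delta> = 1 / (2 * y)"
  define T where "T = (LINT t|lborel. (cmod (g (t + \<delta>) - g t))\<^sup>2)"
  define E where "E = (LINT t|lborel. (cmod (g t))\<^sup>2)"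
  define \<phi> where "\<phi> t = g t * cnj (g (t - x))" for t
  define e where "e t = e2pi (- (y * t))" for t
  have gx: "square_integrable (\<lambda>t. g (t + - x))" by (rule square_integrable_shift[OF g])
  have gd: "square_integrable (\<lambda>t. g (t + \<delta>))" by (rule square_integrable_shift[OF g])
  have gxd: "square_integrable (\<lambda>t. g (t + \<delta> + - x))" by (rule square_integrable_shift[OF gx])
  have i\<phi>: "integrable lborel \<phi>" unfolding \<phi>_def using integrable_mult_cnj[OF g gx] by simp
  have twice: "2 * stft g g x y = (LINT t|lborel. (\<phi> t - \<phi> (t + \<delta>)) * e t)"
    using double_stft_eq_shift_difference[OF g y, of x] by (simp add: \<phi>_def[abs_def] \<delta>_def e_def)
  have "2 * cmod (stft g g x y) = cmod (LINT t|lborel. (\<phi> t - \<phi> (t + \<delta>)) * e t)"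
    by (simp add: norm_mult flip: twice)
  also have "\<dots> \<le> (LINT t|lborel. norm ((\<phi> t - \<phi> (t + \<delta>)) * e t))"
    by (rule integral_norm_bound)
  also have "\<dots> = (LINT t|lborel. cmod (\<phi> t - \<phi> (t + \<delta>)))"
    by (simp add: norm_mult e_def)
  also have "\<dots> \<le> (LINT t|lborel. cmod (g t - g (t + \<delta>)) * cmod (g (t + - x))
                 + cmod (g (t + - x) - g (t + \<delta> + - x)) * cmod (g (t + \<delta>)))"
  proof (rule integral_mono)
    show "integrable lborel (\<lambda>t. cmod (\<phi> t - \<phi> (t + \<delta>)))"
      using i\<phi> lborel_integrable_shift_iff[of \<phi> \<delta>] by simp
    show "integrable lborel (\<lambda>t. cmod (g t - g (t + \<delta>)) * cmod (g (t + - x))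
                 + cmod (g (t + - x) - g (t + \<delta> + - x)) * cmod (g (t + \<delta>)))"
      using integrable_norm_mult[OF square_integrable_diff[OF g gd] gx]
        integrable_norm_mult[OF square_integrable_diff[OF gx gxd] gd] by simp
    fix t
    have "\<phi> t - \<phi> (t + \<delta>) = (g t - g (t + \<delta>)) * cnj (g (t - x))
        + g (t + \<delta>) * cnj (g (t - x) - g (t + \<delta> - x))"
      by (simp add: \<phi>_def algebra_simps)
    thus "cmod (\<phi> t - \<phi> (t + \<delta>)) \<le> cmod (g t - g (t + \<delta>)) * cmod (g (t + - x))
                 + cmod (g (t + - x) - g (t + \<delta> + - x)) * cmod (g (t + \<delta>))"
      using norm_triangle_ineq[of "(g t - g (t + \<delta>)) * cnj (g (t - x))"
          "g (t + \<delta>) * cnj (g (t - x) - g (t + \<delta> - x))"]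
      by (simp add: norm_mult mult.commute complex_mod_cnj flip: complex_cnj_diff)
  qed
  also have "\<dots> = (LINT t|lborel. cmod (g t - g (t + \<delta>)) * cmod (g (t + - x)))
                 + (LINT t|lborel. cmod (g (t + - x) - g (t + \<delta> + - x)) * cmod (g (t + \<delta>)))"
    using integrable_norm_mult[OF square_integrable_diff[OF g gd] gx]
      integrable_norm_mult[OF square_integrable_diff[OF gx gxd] gd] by simp
  also have "\<dots> \<le> (a * T + E / a) / 2 + (a * T + E / a) / 2"
  proof (rule add_mono)
    have "(LINT t|lborel. (cmod (g t - g (t + \<delta>)))\<^sup>2) = T"
      unfolding T_def by (simp add: norm_minus_commute)
    thus "(LINT t|lborel. cmod (g t - g (t + \<delta>)) * cmod (g (t + - x))) \<le> (a * T + E / a) / 2"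
      using integral_norm_mult_le_weighted[OF square_integrable_diff[OF g gd] gx a]
        L2_norm_shift[of g "- x"] by (simp add: E_def)
    have "(LINT t|lborel. (cmod (g (t + - x) - g (t + \<delta> + - x)))\<^sup>2) = T"
      using lborel_integral_shift[of "\<lambda>t. (cmod (g t - g (t + \<delta>)))\<^sup>2" "- x"]
      by (simp add: T_def norm_minus_commute algebra_simps)
    thus "(LINT t|lborel. cmod (g (t + - x) - g (t + \<delta> + - x)) * cmod (g (t + \<delta>))) \<le> (a * T + E / a) / 2"
      using integral_norm_mult_le_weighted[OF square_integrable_diff[OF gx gxd] gd a]
        L2_norm_shift[of g \<delta>] by (simp add: E_def)
  qed
  finally show ?thesis by (simp add: T_def E_def \<delta>_def)
qed

lemma stft_small_at_infinity:
  assumes g: "square_integrable g" and \<eta>: "\<eta> > 0"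
  obtains R where "\<And>x y. R < norm (x, y) \<Longrightarrow> cmod (stft g g x y) < \<eta>"
proof -
  define E where "E = (LINT t|lborel. (cmod (g t))\<^sup>2)"
  define a where "a = 2 * (E + 1) / \<eta>"
  have "E \<ge> 0" unfolding E_def by simp
  hence a: "a > 0" and Ea: "E / a < \<eta> / 2"
    using \<eta> by (simp_all add: a_def field_simps)
  have "\<forall>\<^sub>F n in sequentially.
      (LINT t|lborel. (cmod (g t))\<^sup>2 * indicator {t. real n < \<bar>t\<bar>} t) < \<eta> / (2 * a)"
    by (rule order_tendstoD(2)[OF tendsto_L2_tail[OF g]]) (use a \<eta> in simp)
  then obtain N :: nat
    where N: "(LINT t|lborel. (cmod (g t))\<^sup>2 * indicator {t. real N < \<bar>t\<bar>} t) < \<eta> / (2 * a)"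
    unfolding eventually_sequentially by blast
  obtain d where d: "d > 0"
    "\<And>\<delta>. \<bar>\<delta>\<bar> < d \<Longrightarrow> (LINT t|lborel. (cmod (g (t + \<delta>) - g t))\<^sup>2) < \<eta> / a"
    using L2_shift_continuousD[OF square_integrable_imp_L2_shift_continuous[OF g], of "\<eta> / a"] a \<eta>
    by auto
  show ?thesis
  proof (rule that[of "2 * real N + 1 / (2 * d)"])
    fix x y :: real assume R: "2 * real N + 1 / (2 * d) < norm (x, y)"
    have "norm (x, y) \<le> \<bar>x\<bar> + \<bar>y\<bar>" using norm_Pair_le[of x y] by simp
    hence "2 * real N < \<bar>x\<bar> \<or> 1 / (2 * d) < \<bar>y\<bar>" using R by linarith
    thus "cmod (stft g g x y) < \<eta>"
    proof
      assume x: "2 * real N < \<bar>x\<bar>"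
      have "a * (LINT t|lborel. (cmod (g t))\<^sup>2 * indicator {t. real N < \<bar>t\<bar>} t) < \<eta> / 2"
        using mult_strict_left_mono[OF N a] a by simp
      thus ?thesis using norm_stft_le_tail[OF g x a, of y, folded E_def] Ea by linarith
    next
      assume y_large: "1 / (2 * d) < \<bar>y\<bar>"
      moreover have "0 < 1 / (2 * d)" using d(1) by simp
      ultimately have "\<bar>y\<bar> > 0" by linarith
      hence y: "y \<noteq> 0" and "\<bar>1 / (2 * y)\<bar> < d"
        using y_large d(1) by (auto simp: field_simps abs_mult)
      hence "a * (LINT t|lborel. (cmod (g (t + 1 / (2 * y)) - g t))\<^sup>2) < \<eta>"
        using mult_strict_left_mono[OF d(2) a] a by simp
      thus ?thesis using norm_stft_le_shift[OF g y a, of x, folded E_def] Ea \<eta> by linarith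
    qed
  qed
qed

lemma norm_quadratic_form_le:
  fixes A :: "complex^'n::finite^'n" and u :: "complex^'n"
  assumes u: "\<And>k. cmod (u $ k) \<le> \<eta>"
  shows "cmod (\<Sum>k\<in>UNIV. (A *v u) $ k * cnj (u $ k)) \<le> (\<Sum>k\<in>UNIV. \<Sum>l\<in>UNIV. cmod (A $ k $ l)) * \<eta>\<^sup>2"
proof -
  have "\<eta> \<ge> 0" using norm_ge_zero order_trans u by blast
  have Au: "cmod ((A *v u) $ k) \<le> (\<Sum>l\<in>UNIV. cmod (A $ k $ l)) * \<eta>" for k
  proof -
    have "cmod ((A *v u) $ k) \<le> (\<Sum>l\<in>UNIV. cmod (A $ k $ l) * \<eta>)"
      unfolding matrix_vector_mult_def vec_lambda_beta
      by (rule sum_norm_le) (simp add: norm_mult mult_left_mono u)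
    thus ?thesis by (simp add: sum_distrib_right)
  qed
  have "cmod (\<Sum>k\<in>UNIV. (A *v u) $ k * cnj (u $ k)) \<le> (\<Sum>k\<in>UNIV. ((\<Sum>l\<in>UNIV. cmod (A $ k $ l)) * \<eta>) * \<eta>)"
    by (rule sum_norm_le)
      (use \<open>\<eta> \<ge> 0\<close> in \<open>auto simp: norm_mult intro!: mult_mono Au u sum_nonneg mult_nonneg_nonneg\<close>)
  also have "\<dots> = (\<Sum>k\<in>UNIV. \<Sum>l\<in>UNIV. cmod (A $ k $ l)) * \<eta>\<^sup>2"
    by (simp add: sum_distrib_right power2_eq_square mult.assoc)
  finally show ?thesis .
qed

lemma norm_uvec: "cmod (uvec g \<Lambda> a b $ k) = cmod (stft g g (a - fst (\<Lambda> k)) (b - snd (\<Lambda> k)))"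
  by (simp add: uvec_def exp_minus_eq_e2pi norm_mult)

text \<open>No independence is needed here: \<open>F\<close> is a quadratic form in \<open>u\<close> for whatever matrix
  \<open>matrix_inv\<close> returns.\<close>

lemma Re_Ffun_less_1_far_away:
  assumes g: "square_integrable g"
  obtains R where "R > 0" "\<And>a b. R < norm (a, b) \<Longrightarrow> Re (Ffun g \<Lambda> a b) < 1"
proof -
  define K where "K = (\<Sum>k\<in>UNIV. \<Sum>l\<in>UNIV. cmod (matrix_inv (gram g \<Lambda>) $ k $ l))"
  define \<eta> where "\<eta> = 1 / sqrt (K + 1)"
  have K: "K \<ge> 0" unfolding K_def by (intro sum_nonneg) auto
  hence \<eta>: "\<eta> > 0" and K\<eta>: "K * \<eta>\<^sup>2 < 1"
    by (simp_all add: \<eta>_def power_divide)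
  obtain R0 where R0: "\<And>x y. R0 < norm (x, y) \<Longrightarrow> cmod (stft g g x y) < \<eta>"
    using stft_small_at_infinity[OF g \<eta>] by blast
  define P where "P = (\<Sum>k\<in>UNIV. norm (\<Lambda> k))"
  show ?thesis
  proof (rule that[of "max 1 (R0 + P)"])
    fix a b :: real assume ab: "max 1 (R0 + P) < norm (a, b)"
    have "cmod (uvec g \<Lambda> a b $ k) \<le> \<eta>" for k
    proof -
      have "norm (\<Lambda> k) \<le> P" unfolding P_def by (rule member_le_sum) auto
      moreover have "norm (a, b) - norm (\<Lambda> k) \<le> norm ((a, b) - \<Lambda> k)"
        by (rule norm_triangle_ineq2)
      moreover have "(a, b) - \<Lambda> k = (a - fst (\<Lambda> k), b - snd (\<Lambda> k))"
        by (simp add: prod_eq_iff)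
      ultimately show ?thesis using R0[of "a - fst (\<Lambda> k)" "b - snd (\<Lambda> k)"] ab
        by (simp add: norm_uvec)
    qed
    hence "cmod (Ffun g \<Lambda> a b) \<le> K * \<eta>\<^sup>2"
      unfolding Ffun_def Let_def K_def by (rule norm_quadratic_form_le)
    thus "Re (Ffun g \<Lambda> a b) < 1" using K\<eta> abs_Re_le_cmod[of "Ffun g \<Lambda> a b"] by linarith
  qed simp
qed

theorem corollary3p2:
  fixes g :: "real \<Rightarrow> complex" and \<Lambda> :: "'n::finite \<Rightarrow> real \<times> real"
  assumes "g \<in> borel_measurable lborel"
    and "integrable lborel (\<lambda>t. (cmod (g t))\<^sup>2)"
    and "(LINT t|lborel. (cmod (g t))\<^sup>2) = 1"
    and "lin_indep_L2 (gabor g \<Lambda>)"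
  shows "(\<forall>a b. lin_indep_L2 (gabor g (extend_pts \<Lambda> (a, b))) \<longleftrightarrow> Re (Ffun g \<Lambda> a b) < 1)
       \<and> (\<exists>R>0. \<forall>a b. norm (a, b) > R \<longrightarrow> lin_indep_L2 (gabor g (extend_pts \<Lambda> (a, b))))"
proof -
  have g: "square_integrable g" using assms(1,2) by (simp add: square_integrable_def)
  have criterion: "lin_indep_L2 (gabor g (extend_pts \<Lambda> (a, b))) \<longleftrightarrow> Re (Ffun g \<Lambda> a b) < 1" for a b
    by (rule lin_indep_L2_gabor_extend_iff[OF g assms(3,4)])
  obtain R where "R > 0" "\<And>a b. R < norm (a, b) \<Longrightarrow> Re (Ffun g \<Lambda> a b) < 1"
    using Re_Ffun_less_1_far_away[OF g] by blast
  with criterion show ?thesis by blast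
qed

end
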